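(* Let $\dot P$ be a diverse colored poset and let $n$ be a positive integer. Then $$2n\le \tilde{R}(\dot P,Q_n)\le h(P)\,n+\dim_2(P).$$
   Context: A poset is a set with a reflexive, antisymmetric, transitive relation; its elements are called vertices. $Q_N$ denotes the Boolean lattice of all subsets of an $N$-element set ordered by inclusion. A colored poset $\dot P=(P,c_P)$ is a poset $P$ together with a coloring $c_P\colon P\to\{\text{blue},\text{red}\}$. A (induced) copy of a poset $P$ in a poset $Q$ is the image of an injective map $\phi\colon P\to Q$ with $X\le_P Y$ iff $\phi(X)\le_Q\phi(Y)$. Given a coloring of $Q$, a copy of the colored poset $\dot P$ is an induced copy of $P$ in which each vertex has the same color as the corresponding vertex of $\dot P$. A monochromatic copy of $Q_n$ is an induced copy of $Q_n$ all of whose vertices have the same color. The poset Erdős–Hajnal number $\tilde{R}(\dot P,Q_n)$ is the minimum $N$ such that every blue/red coloring of the vertices of $Q_N$ contains a copy of $\dot P$ or a monochromatic (all blue or all red) induced copy of $Q_n$. $\dot P$ is diverse if it contains two comparable vertices of distinct colors. The height $h(P)$ is the size of a largest chain in $P$, and the 2-dimension $\dim_2(P)$ is the smallest $N$ such that $Q_N$ contains an induced copy of $P$. *)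

theory Defs
  imports Main
begin

definition is_poset :: "'a set \<Rightarrow> ('a \<Rightarrow> 'a \<Rightarrow> bool) \<Rightarrow> bool" where
  "is_poset A le \<longleftrightarrow> finite A \<and>
     (\<forall>x\<in>A. le x x) \<and>
     (\<forall>x\<in>A. \<forall>y\<in>A. le x y \<and> le y x \<longrightarrow> x = y) \<and>
     (\<forall>x\<in>A. \<forall>y\<in>A. \<forall>z\<in>A. le x y \<and> le y z \<longrightarrow> le x z)"

definition Q :: "nat \<Rightarrow> nat set set" where
  "Q N = Pow {..<N}"

definition induced_copy ::
  "'a set \<Rightarrow> ('a \<Rightarrow> 'a \<Rightarrow> bool) \<Rightarrow> nat \<Rightarrow> ('a \<Rightarrow> nat set) \<Rightarrow> bool" where
  "induced_copy A le N phi \<longleftrightarrow> inj_on phi A \<and> phi ` A \<subseteq> Q N \<and>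
     (\<forall>x\<in>A. \<forall>y\<in>A. le x y \<longleftrightarrow> phi x \<subseteq> phi y)"

definition contains_colored_copy ::
  "'a set \<Rightarrow> ('a \<Rightarrow> 'a \<Rightarrow> bool) \<Rightarrow> ('a \<Rightarrow> bool) \<Rightarrow> nat \<Rightarrow> (nat set \<Rightarrow> bool) \<Rightarrow> bool" where
  "contains_colored_copy A le c N f \<longleftrightarrow>
     (\<exists>phi. induced_copy A le N phi \<and> (\<forall>x\<in>A. f (phi x) = c x))"

definition contains_mono_Qn :: "nat \<Rightarrow> nat \<Rightarrow> (nat set \<Rightarrow> bool) \<Rightarrow> bool" where
  "contains_mono_Qn n N f \<longleftrightarrow>
     (\<exists>psi col. induced_copy (Q n) (\<subseteq>) N psi \<and> (\<forall>X\<in>Q n. f (psi X) = col))"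

definition poset_EH_number ::
  "'a set \<Rightarrow> ('a \<Rightarrow> 'a \<Rightarrow> bool) \<Rightarrow> ('a \<Rightarrow> bool) \<Rightarrow> nat \<Rightarrow> nat" where
  "poset_EH_number A le c n = (LEAST N. \<forall>f :: nat set \<Rightarrow> bool.
      contains_colored_copy A le c N f \<or> contains_mono_Qn n N f)"

definition diverse :: "'a set \<Rightarrow> ('a \<Rightarrow> 'a \<Rightarrow> bool) \<Rightarrow> ('a \<Rightarrow> bool) \<Rightarrow> bool" where
  "diverse A le c \<longleftrightarrow> (\<exists>x\<in>A. \<exists>y\<in>A. le x y \<and> c x \<noteq> c y)"

definition is_chain :: "'a set \<Rightarrow> ('a \<Rightarrow> 'a \<Rightarrow> bool) \<Rightarrow> 'a set \<Rightarrow> bool" where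
  "is_chain A le C \<longleftrightarrow> C \<subseteq> A \<and> (\<forall>x\<in>C. \<forall>y\<in>C. le x y \<or> le y x)"

definition height :: "'a set \<Rightarrow> ('a \<Rightarrow> 'a \<Rightarrow> bool) \<Rightarrow> nat" where
  "height A le = Max (card ` {C. is_chain A le C})"

definition dim2 :: "'a set \<Rightarrow> ('a \<Rightarrow> 'a \<Rightarrow> bool) \<Rightarrow> nat" where
  "dim2 A le = (LEAST N. \<exists>phi. induced_copy A le N phi)"

end

theory Submission
  imports Defs
begin

text \<open>Lower bound: colour a set by whether its size is below n. A copy of \<open>Q\<^sub>n\<close> spans n
  consecutive sizes from its bottom to its top, so inside \<open>Q\<^sub>N\<close> with N < 2n it cannot be
  monochromatic; and a diverse pair would need a large set below a small one.

  Upper bound: embed P into \<open>Q\<^sub>d\<close>, d = dim2 P, and append h = height P blocks of n fresh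
  points. An element x of chain rank k is realised as its embedding, plus the first k blocks in
  full, plus a subset of block k. For fixed x these sets form a copy of \<open>Q\<^sub>n\<close>; if no copy of
  \<open>Q\<^sub>n\<close> is monochromatic, one of them has the colour of x. Choosing it for every x gives a
  coloured copy of P, since elements of larger rank occupy strictly later blocks.\<close>

definition EH_property :: "'a set \<Rightarrow> ('a \<Rightarrow> 'a \<Rightarrow> bool) \<Rightarrow> ('a \<Rightarrow> bool) \<Rightarrow> nat \<Rightarrow> nat \<Rightarrow> bool" where
  "EH_property A le c n N \<longleftrightarrow>
     (\<forall>f :: nat set \<Rightarrow> bool. contains_colored_copy A le c N f \<or> contains_mono_Qn n N f)"

lemma poset_EH_number_eq_Least: "poset_EH_number A le c n = (LEAST N. EH_property A le c n N)"
  unfolding poset_EH_number_def EH_property_def ..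

lemma induced_copy_subset_lessThan:
  assumes "induced_copy A le N phi" and "x \<in> A"
  shows "phi x \<subseteq> {..<N}"
  using assms unfolding induced_copy_def Q_def by blast

lemma induced_copy_finite:
  assumes "induced_copy A le N phi" and "x \<in> A"
  shows "finite (phi x)"
  using induced_copy_subset_lessThan[OF assms] finite_subset by blast

lemma induced_copy_subset_iff:
  assumes "induced_copy A le N phi" and "x \<in> A" "y \<in> A"
  shows "phi x \<subseteq> phi y \<longleftrightarrow> le x y"
  using assms unfolding induced_copy_def by blast

lemma induced_copy_eq_iff:
  assumes "induced_copy A le N phi" and "x \<in> A" "y \<in> A"
  shows "phi x = phi y \<longleftrightarrow> x = y"
  using assms unfolding induced_copy_def by (blast dest: inj_onD)

lemma induced_copyI:
  assumes "is_poset A le"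
    and "\<And>x. x \<in> A \<Longrightarrow> phi x \<in> Q N"
    and "\<And>x y. x \<in> A \<Longrightarrow> y \<in> A \<Longrightarrow> le x y \<longleftrightarrow> phi x \<subseteq> phi y"
  shows "induced_copy A le N phi"
  unfolding induced_copy_def
proof (intro conjI)
  show "inj_on phi A"
  proof (rule inj_onI)
    fix x y assume "x \<in> A" "y \<in> A" "phi x = phi y"
    with assms(1,3) show "x = y" unfolding is_poset_def by blast
  qed
qed (use assms(2,3) in auto)

lemma is_poset_Q: "is_poset (Q n) (\<subseteq>)"
  unfolding is_poset_def Q_def by auto

definition threshold_coloring :: "nat \<Rightarrow> bool \<Rightarrow> nat set \<Rightarrow> bool" where
  "threshold_coloring n b X \<longleftrightarrow> (b \<longleftrightarrow> card X < n)"

lemma induced_copy_Q_card_growth: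
  assumes "induced_copy (Q n) (\<subseteq>) N psi" and "k \<le> n"
  shows "card (psi {}) + k \<le> card (psi {..<k})"
  using assms(2)
proof (induction k)
  case 0
  then show ?case by simp
next
  case (Suc k)
  have in_Q: "{..<k} \<in> Q n" "{..<Suc k} \<in> Q n"
    using Suc.prems by (auto simp: Q_def)
  have "psi {..<k} \<subseteq> psi {..<Suc k}"
    using induced_copy_subset_iff[OF assms(1) in_Q] by auto
  moreover have "psi {..<k} \<noteq> psi {..<Suc k}"
    using induced_copy_eq_iff[OF assms(1) in_Q] by (metis lessI lessThan_iff less_irrefl)
  ultimately have "card (psi {..<k}) < card (psi {..<Suc k})"
    using induced_copy_finite[OF assms(1) in_Q(2)] by (meson psubsetI psubset_card_mono)
  with Suc show ?case by simp
qed

lemma not_contains_colored_copy_threshold_coloring: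
  assumes "x \<in> A" "y \<in> A" "le x y" "c x \<noteq> c y"
  shows "\<not> contains_colored_copy A le c N (threshold_coloring n (c y))"
proof
  assume "contains_colored_copy A le c N (threshold_coloring n (c y))"
  then obtain phi where phi: "induced_copy A le N phi"
    and col: "\<forall>z\<in>A. threshold_coloring n (c y) (phi z) = c z"
    unfolding contains_colored_copy_def by blast
  have "phi x \<subseteq> phi y" using induced_copy_subset_iff[OF phi assms(1,2)] assms(3) ..
  then have "card (phi x) \<le> card (phi y)"
    using induced_copy_finite[OF phi assms(2)] by (rule card_mono[rotated])
  moreover have "card (phi y) < n" "\<not> card (phi x) < n"
    using col assms unfolding threshold_coloring_def by auto
  ultimately show False by simp
qed

lemma not_contains_mono_Qn_threshold_coloring:
  assumes "N < 2 * n"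
  shows "\<not> contains_mono_Qn n N (threshold_coloring n b)"
proof
  assume "contains_mono_Qn n N (threshold_coloring n b)"
  then obtain psi col where psi: "induced_copy (Q n) (\<subseteq>) N psi"
    and mono: "\<forall>X\<in>Q n. threshold_coloring n b (psi X) = col"
    unfolding contains_mono_Qn_def by blast
  have in_Q: "{} \<in> Q n" "{..<n} \<in> Q n" by (auto simp: Q_def)
  have "card (psi {}) + n \<le> card (psi {..<n})"
    using induced_copy_Q_card_growth[OF psi] by simp
  moreover have "card (psi {..<n}) \<le> N"
    using induced_copy_subset_lessThan[OF psi in_Q(2)] by (metis card_lessThan card_mono finite_lessThan)
  moreover have "card (psi {}) < n \<longleftrightarrow> card (psi {..<n}) < n"
    using mono in_Q unfolding threshold_coloring_def by auto
  ultimately show False using assms by linarith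
qed

lemma not_EH_property_below_double:
  assumes "diverse A le c" and "N < 2 * n"
  shows "\<not> EH_property A le c n N"
proof -
  obtain x y where "x \<in> A" "y \<in> A" "le x y" "c x \<noteq> c y"
    using assms(1) unfolding diverse_def by blast
  then have "\<not> contains_colored_copy A le c N (threshold_coloring n (c y))"
    by (rule not_contains_colored_copy_threshold_coloring)
  moreover have "\<not> contains_mono_Qn n N (threshold_coloring n (c y))"
    using assms(2) by (rule not_contains_mono_Qn_threshold_coloring)
  ultimately show ?thesis unfolding EH_property_def by blast
qed

lemma ex_induced_copy_card:
  assumes "is_poset A le"
  shows "\<exists>phi. induced_copy A le (card A) phi"
proof -
  have finA: "finite A" and refl: "\<And>x. x \<in> A \<Longrightarrow> le x x"
    and trans: "\<And>x y z. x \<in> A \<Longrightarrow> y \<in> A \<Longrightarrow> z \<in> A \<Longrightarrow> le x y \<Longrightarrow> le y z \<Longrightarrow> le x z"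
    using assms unfolding is_poset_def by blast+
  obtain idx where idx: "bij_betw idx A {0..<card A}"
    using ex_bij_betw_finite_nat[OF finA] by blast
  define phi where "phi x = idx ` {y\<in>A. le y x}" for x
  have "le x y \<longleftrightarrow> phi x \<subseteq> phi y" if "x \<in> A" "y \<in> A" for x y
  proof
    assume "le x y"
    then show "phi x \<subseteq> phi y"
      unfolding phi_def using trans that by (intro image_mono) blast
  next
    assume "phi x \<subseteq> phi y"
    moreover have "idx x \<in> phi x" unfolding phi_def using refl that by blast
    ultimately obtain z where "z \<in> A" "le z y" "idx x = idx z" unfolding phi_def by blast
    then show "le x y"
      using idx that(1) unfolding bij_betw_def inj_on_def by metis
  qed
  moreover have "phi x \<in> Q (card A)" for x
    using idx unfolding phi_def Q_def bij_betw_def by auto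
  ultimately show ?thesis using induced_copyI[OF assms] by blast
qed

lemma ex_induced_copy_dim2:
  assumes "is_poset A le"
  shows "\<exists>phi. induced_copy A le (dim2 A le) phi"
  unfolding dim2_def using ex_induced_copy_card[OF assms] by (rule LeastI_ex[OF exI])

definition chain_rank :: "'a set \<Rightarrow> ('a \<Rightarrow> 'a \<Rightarrow> bool) \<Rightarrow> 'a \<Rightarrow> nat" where
  "chain_rank A le x = Max (card ` {C. is_chain A le C \<and> (\<forall>z\<in>C. le z x \<and> z \<noteq> x)})"

lemma finite_chains:
  assumes "is_poset A le"
  shows "finite {C. is_chain A le C}"
proof (rule finite_subset)
  show "{C. is_chain A le C} \<subseteq> Pow A" by (auto simp: is_chain_def)
  show "finite (Pow A)" using assms by (simp add: is_poset_def)
qed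

lemma finite_chains_below:
  assumes "is_poset A le"
  shows "finite {C. is_chain A le C \<and> (\<forall>z\<in>C. le z x \<and> z \<noteq> x)}"
  by (rule finite_subset[OF _ finite_chains[OF assms]]) blast

lemma chain_rank_ge:
  assumes "is_poset A le" and "is_chain A le C" and "\<forall>z\<in>C. le z x \<and> z \<noteq> x"
  shows "card C \<le> chain_rank A le x"
  unfolding chain_rank_def using assms(2,3) finite_chains_below[OF assms(1)]
  by (intro Max_ge) simp_all

lemma chain_rank_attained:
  assumes "is_poset A le" and "x \<in> A"
  obtains C where "is_chain A le (insert x C)" "x \<notin> C" "finite C"
    "\<forall>z\<in>C. le z x" "card C = chain_rank A le x"
proof -
  let ?S = "{C. is_chain A le C \<and> (\<forall>z\<in>C. le z x \<and> z \<noteq> x)}"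
  have "finite ?S" by (rule finite_chains_below[OF assms(1)])
  moreover have "{} \<in> ?S" by (simp add: is_chain_def)
  ultimately have "chain_rank A le x \<in> card ` ?S"
    unfolding chain_rank_def by (intro Max_in) auto
  then obtain C where C: "is_chain A le C" "\<forall>z\<in>C. le z x \<and> z \<noteq> x" "card C = chain_rank A le x"
    by auto
  moreover have "finite C"
    using C(1) assms(1) unfolding is_chain_def is_poset_def by (blast intro: finite_subset)
  moreover have "is_chain A le (insert x C)"
    using C(1,2) assms unfolding is_chain_def is_poset_def by auto
  ultimately show thesis using that by blast
qed

lemma chain_rank_less_height:
  assumes "is_poset A le" and "x \<in> A"
  shows "chain_rank A le x < height A le"
proof -
  obtain C where C: "is_chain A le (insert x C)" "x \<notin> C" "finite C"
    "card C = chain_rank A le x"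
    using chain_rank_attained[OF assms] by metis
  have "card (insert x C) \<le> height A le"
    unfolding height_def using C(1) finite_chains[OF assms(1)]
    by (intro Max_ge finite_imageI imageI) simp_all
  with C(2-4) show ?thesis by simp
qed

lemma chain_rank_strict_mono:
  assumes "is_poset A le" and "x \<in> A" "y \<in> A" "le x y" "x \<noteq> y"
  shows "chain_rank A le x < chain_rank A le y"
proof -
  obtain C where C: "is_chain A le (insert x C)" "x \<notin> C" "finite C"
    "\<forall>z\<in>C. le z x" "card C = chain_rank A le x"
    using chain_rank_attained[OF assms(1,2)] by metis
  have antisym: "\<And>u v. u \<in> A \<Longrightarrow> v \<in> A \<Longrightarrow> le u v \<Longrightarrow> le v u \<Longrightarrow> u = v"
    and trans: "\<And>u v w. u \<in> A \<Longrightarrow> v \<in> A \<Longrightarrow> w \<in> A \<Longrightarrow> le u v \<Longrightarrow> le v w \<Longrightarrow> le u w"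
    using assms(1) unfolding is_poset_def by blast+
  have "le z y \<and> z \<noteq> y" if "z \<in> C" for z
  proof
    have "z \<in> A" using C(1) that unfolding is_chain_def by blast
    then show "le z y" using trans C(4) that assms(2-4) by blast
    show "z \<noteq> y" using antisym C(4) that assms(2-5) by blast
  qed
  then have "\<forall>z\<in>insert x C. le z y \<and> z \<noteq> y" using assms(4,5) by blast
  then have "card (insert x C) \<le> chain_rank A le y"
    by (rule chain_rank_ge[OF assms(1) C(1)])
  with C(2,3,5) show ?thesis by simp
qed

definition block_lift :: "nat \<Rightarrow> nat \<Rightarrow> nat set \<Rightarrow> nat \<Rightarrow> nat set \<Rightarrow> nat set" where
  "block_lift d n B k Y = B \<union> {d..<d + k * n} \<union> (\<lambda>y. y + (d + k * n)) ` Y"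

lemma block_lift_inter_lessThan:
  assumes "B \<subseteq> {..<d}"
  shows "block_lift d n B k Y \<inter> {..<d} = B"
  using assms unfolding block_lift_def by auto

lemma block_lift_subset_iff:
  assumes "B \<subseteq> {..<d}"
  shows "block_lift d n B k Y \<subseteq> block_lift d n B k Y' \<longleftrightarrow> Y \<subseteq> Y'"
proof
  assume lift: "block_lift d n B k Y \<subseteq> block_lift d n B k Y'"
  show "Y \<subseteq> Y'"
  proof
    fix y assume "y \<in> Y"
    then have "y + (d + k * n) \<in> block_lift d n B k Y'"
      using lift unfolding block_lift_def by blast
    then show "y \<in> Y'" using assms unfolding block_lift_def by auto
  qed
qed (auto simp: block_lift_def)

lemma block_lift_in_Q:
  assumes "B \<subseteq> {..<d}" and "Y \<subseteq> {..<n}" and "d + Suc k * n \<le> N"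
  shows "block_lift d n B k Y \<in> Q N"
  using assms unfolding block_lift_def Q_def by fastforce

lemma block_lift_induced_copy:
  assumes "B \<subseteq> {..<d}" and "d + Suc k * n \<le> N"
  shows "induced_copy (Q n) (\<subseteq>) N (block_lift d n B k)"
proof (rule induced_copyI[OF is_poset_Q])
  fix Y assume "Y \<in> Q n"
  then show "block_lift d n B k Y \<in> Q N"
    using assms by (intro block_lift_in_Q) (auto simp: Q_def)
qed (simp add: block_lift_subset_iff[OF assms(1)])

lemma block_lift_mono:
  assumes "B \<subseteq> B'" and "k < k'" and "Y \<subseteq> {..<n}"
  shows "block_lift d n B k Y \<subseteq> block_lift d n B' k' Y'"
proof -
  have "Suc k * n \<le> k' * n" using assms(2) by (intro mult_le_mono1) simp
  then have "{d..<d + k * n} \<union> (\<lambda>y. y + (d + k * n)) ` Y \<subseteq> {d..<d + k' * n}"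
    using assms(3) by fastforce
  with assms(1) show ?thesis unfolding block_lift_def by blast
qed

lemma no_mono_Qn_color_in_copy:
  assumes "\<not> contains_mono_Qn n N f" and "induced_copy (Q n) (\<subseteq>) N G"
  shows "\<exists>Y\<in>Q n. f (G Y) = b"
  using assms unfolding contains_mono_Qn_def by (metis (full_types))

lemma EH_property_height_dim2:
  assumes P: "is_poset A le"
  shows "EH_property A le c n (height A le * n + dim2 A le)"
  unfolding EH_property_def
proof (intro allI disjCI)
  fix f :: "nat set \<Rightarrow> bool"
  define d where "d = dim2 A le"
  define N where "N = height A le * n + d"
  assume no_mono: "\<not> contains_mono_Qn n (height A le * n + dim2 A le) f"
  obtain phi where phi: "induced_copy A le d phi"
    using ex_induced_copy_dim2[OF P] unfolding d_def by blast
  note base = induced_copy_subset_lessThan[OF phi]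
  let ?G = "\<lambda>x. block_lift d n (phi x) (chain_rank A le x)"
  have room: "d + Suc (chain_rank A le x) * n \<le> N" if "x \<in> A" for x
  proof -
    have "Suc (chain_rank A le x) * n \<le> height A le * n"
      using chain_rank_less_height[OF P that] by (intro mult_le_mono1) simp
    then show ?thesis unfolding N_def by simp
  qed
  have "\<exists>Y\<in>Q n. f (?G x Y) = c x" if "x \<in> A" for x
    by (rule no_mono_Qn_color_in_copy[OF no_mono[folded d_def, folded N_def]
          block_lift_induced_copy[OF base[OF that] room[OF that]]])
  then obtain Y where Y: "\<And>x. x \<in> A \<Longrightarrow> Y x \<in> Q n \<and> f (?G x (Y x)) = c x" by metis
  define psi where "psi x = ?G x (Y x)" for x
  have psi_in_Q: "psi x \<in> Q N" if "x \<in> A" for x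
    unfolding psi_def using base[OF that] _ room[OF that]
    by (rule block_lift_in_Q) (use Y[OF that] in \<open>simp add: Q_def\<close>)
  have psi_order: "le x y \<longleftrightarrow> psi x \<subseteq> psi y" if xy: "x \<in> A" "y \<in> A" for x y
  proof
    assume "le x y"
    show "psi x \<subseteq> psi y"
    proof (cases "x = y")
      case False
      have "phi x \<subseteq> phi y" using induced_copy_subset_iff[OF phi xy] \<open>le x y\<close> ..
      moreover have "chain_rank A le x < chain_rank A le y"
        using chain_rank_strict_mono[OF P xy \<open>le x y\<close> False] .
      moreover have "Y x \<subseteq> {..<n}" using Y[OF xy(1)] by (simp add: Q_def)
      ultimately show ?thesis unfolding psi_def by (rule block_lift_mono)
    qed simp
  next
    assume "psi x \<subseteq> psi y"
    then have "phi x \<subseteq> phi y"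
      unfolding psi_def using block_lift_inter_lessThan[OF base] xy by blast
    then show "le x y" using induced_copy_subset_iff[OF phi xy] by simp
  qed
  have "induced_copy A le N psi" using P psi_in_Q psi_order by (rule induced_copyI)
  moreover have "\<forall>x\<in>A. f (psi x) = c x" using Y unfolding psi_def by blast
  ultimately have "contains_colored_copy A le c N f" unfolding contains_colored_copy_def by blast
  then show "contains_colored_copy A le c (height A le * n + dim2 A le) f"
    by (simp add: N_def d_def)
qed

theorem theorem1:
  fixes A :: "'a set" and le :: "'a \<Rightarrow> 'a \<Rightarrow> bool" and c :: "'a \<Rightarrow> bool" and n :: nat
  assumes "is_poset A le"
    and "diverse A le c"
    and "0 < n"
  shows "2 * n \<le> poset_EH_number A le c n \<and>
         poset_EH_number A le c n \<le> height A le * n + dim2 A le"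
proof
  have upper: "EH_property A le c n (height A le * n + dim2 A le)"
    using EH_property_height_dim2[OF assms(1)] .
  then show "poset_EH_number A le c n \<le> height A le * n + dim2 A le"
    unfolding poset_EH_number_eq_Least by (rule Least_le)
  have "EH_property A le c n (poset_EH_number A le c n)"
    unfolding poset_EH_number_eq_Least using upper by (rule LeastI)
  then show "2 * n \<le> poset_EH_number A le c n"
    using not_EH_property_below_double[OF assms(2)] by (meson not_le)
qed

end
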